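(* Let $(X,\{\tau_k:k<\omega\})$ be a GLP-space and $n<\omega$, and suppose $(X,\tau_{n+1})$ is compact. Then for all $A,B\subseteq X$ and every limit ordinal $\lambda$: $$d_n^\lambda[A]\subseteq d_n(B)\iff \exists\alpha<\lambda\ \ d_n^\alpha[A]\subseteq d_n(B).$$
   Context: For a topology $\tau_n$ on $X$, $d_n(A)$ denotes the set of $\tau_n$-limit points of $A\subseteq X$. A GLP-space is a nonempty set $X$ with topologies $\tau_n$, $n<\omega$, such that $({\mathcal P}(X),\{d_n\})$ is a GLP-algebra, i.e. for all $n$, $m<n$, $x,y\subseteq X$: $d_n(x\cup y)=d_n(x)\cup d_n(y)$; $d_n(\emptyset)=\emptyset$; $d_n(x)=d_n(x\setminus d_n(x))$; $d_n(x)\subseteq d_m(x)$; $d_m(x)\subseteq X\setminus d_n(X\setminus d_m(x))$. For $A\subseteq X$ define by transfinite recursion $d_n^0[A]=X$, $d_n^{\alpha+1}[A]=d_n(d_n^\alpha[A]\cap A)$, and $d_n^\lambda[A]=\bigcap_{\alpha<\lambda}d_n^\alpha[A]$ for limit $\lambda$. *)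

theory Defs
  imports "HOL-Analysis.Analysis"
begin

definition dop :: "(nat \<Rightarrow> 'a topology) \<Rightarrow> nat \<Rightarrow> 'a set \<Rightarrow> 'a set" where
  "dop \<tau> n A = (\<tau> n) derived_set_of A"

text \<open>GLP-space: nonempty X, topologies tau_n on X, and (P(X), d_n) a GLP-algebra.\<close>
definition glp_space :: "'a set \<Rightarrow> (nat \<Rightarrow> 'a topology) \<Rightarrow> bool" where
  "glp_space X \<tau> \<longleftrightarrow> X \<noteq> {} \<and> (\<forall>n. topspace (\<tau> n) = X) \<and>
    (\<forall>n x y. x \<subseteq> X \<and> y \<subseteq> X \<longrightarrow> dop \<tau> n (x \<union> y) = dop \<tau> n x \<union> dop \<tau> n y) \<and>
    (\<forall>n. dop \<tau> n {} = {}) \<and>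
    (\<forall>n x. x \<subseteq> X \<longrightarrow> dop \<tau> n x = dop \<tau> n (x - dop \<tau> n x)) \<and>
    (\<forall>n m x. m < n \<and> x \<subseteq> X \<longrightarrow> dop \<tau> n x \<subseteq> dop \<tau> m x) \<and>
    (\<forall>n m x. m < n \<and> x \<subseteq> X \<longrightarrow> dop \<tau> m x \<subseteq> X - dop \<tau> n (X - dop \<tau> m x))"

text \<open>Transfinite iterates d_n^alpha[A]; ordinals alpha are represented as elements of
  an arbitrary well-ordered type (alpha corresponds to the order type of its initial segment).\<close>
definition dpow :: "(nat \<Rightarrow> 'a topology) \<Rightarrow> nat \<Rightarrow> 'a set \<Rightarrow> 'a set \<Rightarrow> 'o::wellorder \<Rightarrow> 'a set" where
  "dpow \<tau> n X A = wfrec {(x, y). x < y}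
     (\<lambda>f \<alpha>. if \<not> (\<exists>\<beta>. \<beta> < \<alpha>) then X
            else if (\<exists>\<beta>. \<beta> < \<alpha> \<and> (\<forall>\<gamma>. \<gamma> < \<alpha> \<longrightarrow> \<gamma> \<le> \<beta>))
              then dop \<tau> n (f (THE \<beta>. \<beta> < \<alpha> \<and> (\<forall>\<gamma>. \<gamma> < \<alpha> \<longrightarrow> \<gamma> \<le> \<beta>)) \<inter> A)
            else (\<Inter>\<beta>\<in>{\<beta>. \<beta> < \<alpha>}. f \<beta>))"

definition is_limit :: "'o::wellorder \<Rightarrow> bool" where
  "is_limit l \<longleftrightarrow> (\<exists>\<beta>. \<beta> < l) \<and> (\<forall>\<beta>. \<beta> < l \<longrightarrow> (\<exists>\<gamma>. \<beta> < \<gamma> \<and> \<gamma> < l))"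

end

theory Submission
  imports Defs
begin

text \<open>The transfinite iterates \<open>d\<^sub>n\<^sup>\<alpha>[A]\<close> are \<open>\<tau>\<^sub>n\<close>-closed (the axiom \<open>d x = d (x - d x)\<close>
  forces derived sets to be closed), decrease in \<open>\<alpha>\<close>, and are even \<open>\<tau>\<^sub>n\<^sub>+\<^sub>1\<close>-closed because
  \<open>d\<^sub>n\<^sub>+\<^sub>1 \<subseteq> d\<^sub>n\<close>; meanwhile \<open>d\<^sub>n(B)\<close> is \<open>\<tau>\<^sub>n\<^sub>+\<^sub>1\<close>-open by the last GLP axiom. At a limit
  \<open>\<lambda>\<close>, \<open>d\<^sub>n\<^sup>\<lambda>[A]\<close> is the intersection of the decreasing chain \<open>d\<^sub>n\<^sup>\<alpha>[A]\<close>, \<open>\<alpha> < \<lambda>\<close>, so by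
  compactness of \<open>\<tau>\<^sub>n\<^sub>+\<^sub>1\<close> it lies in the open set \<open>d\<^sub>n(B)\<close> only if some member of the
  chain already does.\<close>

lemma wellorder_zero_succ_limit_cases:
  fixes \<alpha> :: "'o::wellorder"
  obtains (zero) "\<nexists>\<beta>. \<beta> < \<alpha>"
  | (succ) p where "p < \<alpha>" "\<forall>\<gamma><\<alpha>. \<gamma> \<le> p"
  | (limit) "is_limit \<alpha>"
  unfolding is_limit_def by (metis not_le)

lemma the_greatest_below_eq:
  fixes p :: "'o::order"
  assumes "p < \<alpha>" "\<forall>\<gamma><\<alpha>. \<gamma> \<le> p"
  shows "(THE \<beta>. \<beta> < \<alpha> \<and> (\<forall>\<gamma>. \<gamma> < \<alpha> \<longrightarrow> \<gamma> \<le> \<beta>)) = p"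
  using assms by (auto intro!: the_equality intro: order.antisym)

lemma dpow_unfold:
  "dpow \<tau> n X A (\<alpha>::'o::wellorder) =
     (if \<not> (\<exists>\<beta>. \<beta> < \<alpha>) then X
      else if (\<exists>\<beta>. \<beta> < \<alpha> \<and> (\<forall>\<gamma>. \<gamma> < \<alpha> \<longrightarrow> \<gamma> \<le> \<beta>))
        then dop \<tau> n (dpow \<tau> n X A (THE \<beta>. \<beta> < \<alpha> \<and> (\<forall>\<gamma>. \<gamma> < \<alpha> \<longrightarrow> \<gamma> \<le> \<beta>)) \<inter> A)
      else (\<Inter>\<beta>\<in>{\<beta>. \<beta> < \<alpha>}. dpow \<tau> n X A \<beta>))"
proof (cases "\<exists>\<beta>. \<beta> < \<alpha> \<and> (\<forall>\<gamma>. \<gamma> < \<alpha> \<longrightarrow> \<gamma> \<le> \<beta>)")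
  case True
  then obtain p where p: "p < \<alpha>" "\<forall>\<gamma><\<alpha>. \<gamma> \<le> p"
    by blast
  show ?thesis
    unfolding dpow_def using True p
    by (subst wfrec[OF wf]) (simp add: cut_apply the_greatest_below_eq)
next
  case False
  have cut_image: "cut f {(x, y). x < y} \<alpha> ` {\<beta>. \<beta> < \<alpha>} = f ` {\<beta>. \<beta> < \<alpha>}"
    for f :: "'o \<Rightarrow> 'a set"
    by (auto simp: cut_apply image_def)
  show ?thesis
    unfolding dpow_def
    by (subst wfrec[OF wf], simp only: cut_image)
      (use False in \<open>simp del: not_all not_ex add: if_not_P[OF False]\<close>)
qed

lemma dpow_zero:
  assumes "\<nexists>\<beta>. \<beta> < \<alpha>"
  shows "dpow \<tau> n X A (\<alpha>::'o::wellorder) = X"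
  using assms by (subst dpow_unfold) simp

lemma dpow_succ:
  assumes "p < \<alpha>" "\<forall>\<gamma><\<alpha>. \<gamma> \<le> p"
  shows "dpow \<tau> n X A (\<alpha>::'o::wellorder) = dop \<tau> n (dpow \<tau> n X A p \<inter> A)"
  using assms by (subst dpow_unfold) (auto simp: the_greatest_below_eq)

lemma dpow_limit:
  assumes "is_limit \<alpha>"
  shows "dpow \<tau> n X A (\<alpha>::'o::wellorder) = (\<Inter>\<beta>\<in>{\<beta>. \<beta> < \<alpha>}. dpow \<tau> n X A \<beta>)"
  using assms unfolding is_limit_def by (subst dpow_unfold) (metis not_le)

lemma in_derived_set_of_singleton_if_isolated:
  assumes "openin T U" "U \<inter> Y \<subseteq> {p}" "q \<in> U" "q \<in> T derived_set_of Y" "q \<noteq> p"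
  shows "q \<in> T derived_set_of {p}"
  unfolding in_derived_set_of
proof (intro conjI allI impI)
  show "q \<in> topspace T"
    using assms(4) by (simp add: in_derived_set_of)
  fix W assume "q \<in> W \<and> openin T W"
  then have "q \<in> W \<inter> U" "openin T (W \<inter> U)"
    using assms(1,3) by auto
  then obtain y where "y \<noteq> q" "y \<in> Y" "y \<in> W \<inter> U"
    using assms(4) unfolding in_derived_set_of by blast
  then show "\<exists>y. y \<noteq> q \<and> y \<in> {p} \<and> y \<in> W"
    using assms(2) by blast
qed

lemma dense_in_itself_empty_if_derived_set_of_minus:
  assumes "\<And>S. S \<subseteq> topspace T \<Longrightarrow> T derived_set_of S = T derived_set_of (S - T derived_set_of S)"
    and "S \<subseteq> topspace T" "S \<subseteq> T derived_set_of S"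
  shows "S = {}"
proof -
  have "S - T derived_set_of S = {}"
    using assms(3) by blast
  then have "T derived_set_of S = {}"
    using assms(1)[OF assms(2)] by (metis derived_set_of_empty)
  then show ?thesis
    using assms(3) by blast
qed

text \<open>If \<open>p \<in> d(d Y) - d Y\<close> with a neighbourhood \<open>U\<close> of \<open>p\<close> missing \<open>Y - {p}\<close>, then
  \<open>{p} \<union> (U \<inter> d{p})\<close> would be a nonempty dense-in-itself set.\<close>
lemma closedin_derived_set_of_if_derived_set_of_minus:
  assumes derived_minus:
    "\<And>S. S \<subseteq> topspace T \<Longrightarrow> T derived_set_of S = T derived_set_of (S - T derived_set_of S)"
  shows "closedin T (T derived_set_of Y)"
proof -
  have "p \<in> T derived_set_of Y" if p: "p \<in> T derived_set_of (T derived_set_of Y)" for p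
  proof (rule ccontr)
    assume "p \<notin> T derived_set_of Y"
    moreover have p_top: "p \<in> topspace T"
      using p by (simp add: in_derived_set_of)
    ultimately obtain U where U: "p \<in> U" "openin T U" "U \<inter> Y \<subseteq> {p}"
      unfolding in_derived_set_of by blast
    define S where "S = {p} \<union> (U \<inter> T derived_set_of {p})"
    have "p \<in> T derived_set_of S"
      unfolding in_derived_set_of
    proof (intro conjI allI impI)
      fix V assume "p \<in> V \<and> openin T V"
      then have "p \<in> U \<inter> V" "openin T (U \<inter> V)"
        using U by auto
      then obtain q where q: "q \<noteq> p" "q \<in> T derived_set_of Y" "q \<in> U \<inter> V"
        using p unfolding in_derived_set_of by blast
      then have "q \<in> T derived_set_of {p}"
        using U by (intro in_derived_set_of_singleton_if_isolated[of T U Y]) auto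
      then show "\<exists>y. y \<noteq> p \<and> y \<in> S \<and> y \<in> V"
        using q by (auto simp: S_def)
    qed (use p_top in simp)
    moreover have "T derived_set_of {p} \<subseteq> T derived_set_of S"
      by (simp add: S_def derived_set_of_mono)
    ultimately have "S \<subseteq> T derived_set_of S"
      by (auto simp: S_def)
    moreover have "S \<subseteq> topspace T"
      using p_top derived_set_of_subset_topspace[of T "{p}"] by (auto simp: S_def)
    ultimately show False
      using dense_in_itself_empty_if_derived_set_of_minus[OF derived_minus] S_def by blast
  qed
  then show ?thesis
    by (auto simp: closedin_contains_derived_set derived_set_of_subset_topspace)
qed

lemma compact_space_decreasing_closed_subset_openin:
  fixes F :: "'i::linorder \<Rightarrow> 'a set"
  assumes "compact_space T" "I \<noteq> {}"
    and closed: "\<And>i. i \<in> I \<Longrightarrow> closedin T (F i)"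
    and decreasing: "\<And>i j. i \<in> I \<Longrightarrow> j \<in> I \<Longrightarrow> i \<le> j \<Longrightarrow> F j \<subseteq> F i"
    and "openin T U" "(\<Inter>i\<in>I. F i) \<subseteq> U"
  shows "\<exists>i\<in>I. F i \<subseteq> U"
proof -
  have "compactin T (topspace T - U)"
    using assms(1,5) by (simp add: closedin_compact_space closedin_diff)
  moreover have "\<forall>V\<in>(\<lambda>i. topspace T - F i) ` I. openin T V"
    using closed by blast
  moreover have "topspace T - U \<subseteq> \<Union>((\<lambda>i. topspace T - F i) ` I)"
    using assms(6) by blast
  ultimately obtain \<F> where "finite \<F>" "\<F> \<subseteq> (\<lambda>i. topspace T - F i) ` I"
    and cover: "topspace T - U \<subseteq> \<Union>\<F>"
    using compactin_def[THEN iffD1, THEN conjunct2, rule_format] by metis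
  then obtain J where J: "J \<subseteq> I" "finite J" and \<F>: "\<F> = (\<lambda>i. topspace T - F i) ` J"
    by (meson finite_subset_image)
  show ?thesis
  proof (cases "J = {}")
    case True
    obtain i where "i \<in> I"
      using assms(2) by blast
    moreover have "F i \<subseteq> topspace T"
      using closed[OF \<open>i \<in> I\<close>] by (rule closedin_subset)
    ultimately show ?thesis
      using cover \<F> True by blast
  next
    case False
    then have "Max J \<in> J" "\<forall>j\<in>J. j \<le> Max J"
      using J by auto
    then have "Max J \<in> I" and Max_least: "\<forall>j\<in>J. F (Max J) \<subseteq> F j"
      using J(1) decreasing by (blast, blast)
    have "F (Max J) \<subseteq> topspace T"
      using closed[OF \<open>Max J \<in> I\<close>] by (rule closedin_subset)
    then have "F (Max J) \<subseteq> U"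
      using cover Max_least unfolding \<F> by blast
    then show ?thesis
      using \<open>Max J \<in> I\<close> by blast
  qed
qed

lemma glp_space_topspace: "glp_space X \<tau> \<Longrightarrow> topspace (\<tau> k) = X"
  by (simp add: glp_space_def)

lemma glp_space_closedin_dop:
  assumes "glp_space X \<tau>"
  shows "closedin (\<tau> k) (dop \<tau> k Y)"
  unfolding dop_def
  by (rule closedin_derived_set_of_if_derived_set_of_minus)
    (use assms in \<open>auto simp: glp_space_def dop_def\<close>)

lemma glp_space_closedin_mono:
  assumes "glp_space X \<tau>" "m < k" "closedin (\<tau> m) S"
  shows "closedin (\<tau> k) S"
proof -
  have "S \<subseteq> X"
    using closedin_subset[OF assms(3)] glp_space_topspace[OF assms(1)] by simp
  then have "dop \<tau> k S \<subseteq> dop \<tau> m S"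
    using assms(1,2) by (simp add: glp_space_def)
  then show ?thesis
    using assms \<open>S \<subseteq> X\<close> by (auto simp: closedin_contains_derived_set dop_def glp_space_topspace)
qed

lemma glp_space_openin_dop:
  assumes "glp_space X \<tau>" "m < k" "Y \<subseteq> X"
  shows "openin (\<tau> k) (dop \<tau> m Y)"
proof -
  have "dop \<tau> m Y \<subseteq> X - dop \<tau> k (X - dop \<tau> m Y)"
    using assms by (simp add: glp_space_def)
  then have "dop \<tau> k (X - dop \<tau> m Y) \<subseteq> X - dop \<tau> m Y"
    using derived_set_of_subset_topspace[of "\<tau> k"] glp_space_topspace[OF assms(1)]
    unfolding dop_def by blast
  moreover have "dop \<tau> m Y \<subseteq> X"
    using derived_set_of_subset_topspace[of "\<tau> m" Y] glp_space_topspace[OF assms(1)]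
    by (simp add: dop_def)
  ultimately show ?thesis
    unfolding openin_closedin_eq
    by (simp add: closedin_contains_derived_set dop_def glp_space_topspace[OF assms(1)])
qed

lemma dpow_closedin:
  assumes "glp_space X \<tau>"
  shows "closedin (\<tau> n) (dpow \<tau> n X A (\<alpha>::'o::wellorder))"
proof (induction \<alpha> rule: less_induct)
  case (less \<alpha>)
  show ?case
  proof (cases \<alpha> rule: wellorder_zero_succ_limit_cases)
    case zero
    then show ?thesis
      using closedin_topspace[of "\<tau> n"] by (simp add: dpow_zero glp_space_topspace[OF assms])
  next
    case (succ p)
    then show ?thesis
      using assms by (simp add: dpow_succ glp_space_closedin_dop)
  next
    case limit
    then show ?thesis
      using less by (auto simp: dpow_limit is_limit_def intro!: closedin_Inter)
  qed
qed

lemma dpow_antimono: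
  assumes "glp_space X \<tau>" "\<beta> < \<alpha>"
  shows "dpow \<tau> n X A (\<alpha>::'o::wellorder) \<subseteq> dpow \<tau> n X A \<beta>"
  using assms(2)
proof (induction \<alpha> arbitrary: \<beta> rule: less_induct)
  case (less \<alpha>)
  show ?case
  proof (cases \<alpha> rule: wellorder_zero_succ_limit_cases)
    case zero
    then show ?thesis
      using less by blast
  next
    case (succ p)
    then have "dpow \<tau> n X A \<alpha> \<subseteq> dop \<tau> n (dpow \<tau> n X A p)"
      by (simp add: dpow_succ dop_def derived_set_of_mono)
    also have "\<dots> \<subseteq> dpow \<tau> n X A p"
      using dpow_closedin[OF assms(1), of n A p] by (simp add: closedin_contains_derived_set dop_def)
    also have "\<dots> \<subseteq> dpow \<tau> n X A \<beta>"
      using less succ by (cases "\<beta> = p") (auto simp: order.order_iff_strict)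
    finally show ?thesis .
  next
    case limit
    then show ?thesis
      using less by (auto simp: dpow_limit)
  qed
qed

theorem mainTheorem6:
  fixes X :: "'a set" and \<tau> :: "nat \<Rightarrow> 'a topology" and n :: nat
    and A B :: "'a set" and l :: "'o::wellorder"
  assumes "glp_space X \<tau>"
    and "compact_space (\<tau> (Suc n))"
    and "A \<subseteq> X" and "B \<subseteq> X"
    and "is_limit l"
  shows "dpow \<tau> n X A l \<subseteq> dop \<tau> n B \<longleftrightarrow>
         (\<exists>\<alpha><l. dpow \<tau> n X A \<alpha> \<subseteq> dop \<tau> n B)"
proof
  assume "dpow \<tau> n X A l \<subseteq> dop \<tau> n B"
  have "\<exists>\<alpha>\<in>{\<alpha>. \<alpha> < l}. dpow \<tau> n X A \<alpha> \<subseteq> dop \<tau> n B"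
  proof (rule compact_space_decreasing_closed_subset_openin[OF assms(2)])
    show "{\<alpha>. \<alpha> < l} \<noteq> {}"
      using assms(5) by (auto simp: is_limit_def)
    show "closedin (\<tau> (Suc n)) (dpow \<tau> n X A \<alpha>)" for \<alpha>
      using glp_space_closedin_mono[OF assms(1) lessI dpow_closedin[OF assms(1)]] .
    show "dpow \<tau> n X A \<beta> \<subseteq> dpow \<tau> n X A \<alpha>" if "\<alpha> \<le> \<beta>" for \<alpha> \<beta>
      using that dpow_antimono[OF assms(1), of \<alpha> \<beta>] by (cases "\<alpha> = \<beta>") (auto simp: order.order_iff_strict)
    show "openin (\<tau> (Suc n)) (dop \<tau> n B)"
      using glp_space_openin_dop[OF assms(1) lessI assms(4)] .
    show "(\<Inter>\<alpha>\<in>{\<alpha>. \<alpha> < l}. dpow \<tau> n X A \<alpha>) \<subseteq> dop \<tau> n B"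
      using \<open>dpow \<tau> n X A l \<subseteq> dop \<tau> n B\<close> assms(5) by (simp add: dpow_limit)
  qed
  then show "\<exists>\<alpha><l. dpow \<tau> n X A \<alpha> \<subseteq> dop \<tau> n B"
    by blast
next
  assume "\<exists>\<alpha><l. dpow \<tau> n X A \<alpha> \<subseteq> dop \<tau> n B"
  then show "dpow \<tau> n X A l \<subseteq> dop \<tau> n B"
    using dpow_antimono[OF assms(1)] by blast
qed

end
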